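(* Let $(X,d)$, $(\Lambda,d_\Lambda)$ be compact metric spaces, $\tau:\Lambda\times X\to X$ continuous and $q:X\to\mathcal P(\Lambda)$ continuous. Assume: (W1) each $\tau_\lambda$ is $1$-Lipschitz on $X$; (CP1) there are an integer $M\ge1$ and $0<s<1$ such that $\tau_{\lambda^M}$ is $s$-Lipschitz on $X$ for every $\lambda^M\in\Lambda^M$; (H2) there is $r\ge0$ with $d(\tau(\lambda_1,x),\tau(\lambda_2,x))\le r\,d_\Lambda(\lambda_1,\lambda_2)$ for all $\lambda_1,\lambda_2$, $x$; (H3) there is $t\ge0$ with $d_{MK}(q_x,q_y)\le t\,d(x,y)$ for all $x,y\in X$; (H4) $q_x(A)>0$ for every nonempty open $A\subseteq\Lambda$ and every $x\in X$; and suppose $s+r\,M\,t<1$. Let $A_{\mathcal R}$ be the unique nonempty compact set with $F_{\mathcal R}(A_{\mathcal R})=A_{\mathcal R}$ and $\mu_{\mathcal R}$ the unique probability with $T_q(\mu_{\mathcal R})=\mu_{\mathcal R}$. Then $\operatorname{supp}(\mu_{\mathcal R})=A_{\mathcal R}$.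
   Context: $\mathcal{P}(Y)$ is the set of Borel probability measures on a compact metric space $Y$, with $d_{MK}(\mu,\nu)=\sup_{f\in \mathrm{Lip}_1(Y)}\{\int f\,d\mu-\int f\,d\nu\}$. $\tau_\lambda(x)=\tau(\lambda,x)$; for $\lambda^j=(\lambda_0,\dots,\lambda_{j-1})$, $\tau_{\lambda^j}=\tau_{\lambda_{j-1}}\circ\cdots\circ\tau_{\lambda_0}$. $F_{\mathcal R}(B)=\bigcup_{\lambda\in\Lambda}\tau_\lambda(B)$ on nonempty compact subsets $B$ of $X$. The Markov operator $T_q$ on $\mathcal P(X)$ is defined by $\int_X f\,dT_q(\mu)=\int_X\int_\Lambda f(\tau(\lambda,x))\,dq_x(\lambda)\,d\mu(x)$ for $f\in C(X)$. *)

theory Defs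
  imports "HOL-Probability.Probability"
begin

definition borel_prob_on :: "'a::metric_space set \<Rightarrow> 'a measure \<Rightarrow> bool" where
  "borel_prob_on Y \<mu> \<longleftrightarrow> prob_space \<mu> \<and> sets \<mu> = sets (restrict_space borel Y)"

definition dMK :: "'a::metric_space set \<Rightarrow> 'a measure \<Rightarrow> 'a measure \<Rightarrow> real" where
  "dMK Y \<mu> \<nu> = Sup {(\<integral>y. f y \<partial>\<mu>) - (\<integral>y. f y \<partial>\<nu>) | f. lipschitz_on 1 Y f}"

fun tau_seq :: "('l \<Rightarrow> 'a \<Rightarrow> 'a) \<Rightarrow> 'l list \<Rightarrow> 'a \<Rightarrow> 'a" where
  "tau_seq \<tau> [] x = x"
| "tau_seq \<tau> (l # ls) x = tau_seq \<tau> ls (\<tau> l x)"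

definition F_R :: "'l set \<Rightarrow> ('l \<Rightarrow> 'a \<Rightarrow> 'a) \<Rightarrow> 'a set \<Rightarrow> 'a set" where
  "F_R L \<tau> B = (\<Union>l\<in>L. \<tau> l ` B)"

text \<open>mu is a fixed point of the Markov operator T_q (tested on C(X)).\<close>
definition Tq_fixed :: "'a::metric_space set \<Rightarrow> ('l \<Rightarrow> 'a \<Rightarrow> 'a) \<Rightarrow> ('a \<Rightarrow> 'l measure)
     \<Rightarrow> 'a measure \<Rightarrow> bool" where
  "Tq_fixed X \<tau> q \<mu> \<longleftrightarrow> (\<forall>f::'a \<Rightarrow> real. continuous_on X f \<longrightarrow>
      (\<integral>x. f x \<partial>\<mu>) = (\<integral>x. (\<integral>l. f (\<tau> l x) \<partial>(q x)) \<partial>\<mu>))"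

definition supp_on :: "'a::metric_space set \<Rightarrow> 'a measure \<Rightarrow> 'a set" where
  "supp_on X \<mu> = {x \<in> X. \<forall>e>0. measure \<mu> (ball x e \<inter> X) > 0}"

end

theory Submission
  imports Defs
begin

(* supp \<mu> \<subseteq> A: let m_k x = sup {d(\<tau>_w x, A) | w a word of length k} and h = \<Sum>k<M. m_k.
   Each \<tau>_\<lambda> is 1-Lipschitz, so h is continuous. Since m_k (\<tau>_\<lambda> x) \<le> m_(k+1) x, the sum
   telescopes to h (\<tau>_\<lambda> x) \<le> h x - d(x, A) + m_M x, and m_M x \<le> s d(x, A) because words of
   length M are s-Lipschitz and map A into itself. Integrating against the T_q-invariant \<mu> gives
   (1 - s) \<integral> d(x, A) d\<mu> \<le> 0.
   A \<subseteq> supp \<mu>: supp \<mu> is closed and nonempty, and, because every q_x has full support,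
   invariant under every \<tau>_\<lambda>. A point a of A is \<tau>_w a' for words w of every length n M with a'
   in A, and then \<tau>_w x0, for any x0 in supp \<mu>, lies within s^n diam X of a. *)

section \<open>Borel probability measures and their support\<close>

lemma (in prob_space) abs_integral_diff_le:
  fixes f g :: "_ \<Rightarrow> real"
  assumes "integrable M f" "integrable M g" "\<And>x. x \<in> space M \<Longrightarrow> \<bar>f x - g x\<bar> \<le> c"
  shows "\<bar>(\<integral>x. f x \<partial>M) - (\<integral>x. g x \<partial>M)\<bar> \<le> c"
proof -
  have "\<bar>(\<integral>x. f x \<partial>M) - (\<integral>x. g x \<partial>M)\<bar> = \<bar>\<integral>x. f x - g x \<partial>M\<bar>"
    using assms(1,2) by simp
  also have "\<dots> \<le> (\<integral>x. \<bar>f x - g x\<bar> \<partial>M)" by (rule integral_abs_bound)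
  also have "\<dots> \<le> c" using assms by (intro integral_le_const AE_I2) auto
  finally show ?thesis .
qed

lemma borel_prob_on_prob_space: "borel_prob_on Y \<nu> \<Longrightarrow> prob_space \<nu>"
  by (simp add: borel_prob_on_def)

lemma borel_prob_on_space: "borel_prob_on Y \<nu> \<Longrightarrow> space \<nu> = Y"
  unfolding borel_prob_on_def
  using sets_eq_imp_space_eq[of \<nu> "restrict_space borel Y"] by (simp add: space_restrict_space)

lemma borel_prob_on_openin_sets:
  assumes "borel_prob_on Y \<nu>" "openin (top_of_set Y) U"
  shows "U \<in> sets \<nu>"
proof -
  obtain T where "open T" "U = Y \<inter> T" using assms(2) by (auto simp: openin_open)
  then show ?thesis using assms(1) by (auto simp: borel_prob_on_def sets_restrict_space)
qed

lemma borel_prob_on_measurable_continuous: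
  assumes "borel_prob_on Y \<nu>" "continuous_on Y f"
  shows "f \<in> borel_measurable \<nu>"
  using borel_measurable_continuous_on_restrict[OF assms(2)] assms(1)
  by (simp add: borel_prob_on_def cong: measurable_cong_sets)

lemma borel_prob_on_integrable_continuous:
  fixes f :: "'a::metric_space \<Rightarrow> real"
  assumes "compact Y" "borel_prob_on Y \<nu>" "continuous_on Y f"
  shows "integrable \<nu> f"
proof -
  interpret prob_space \<nu> using assms(2) by (rule borel_prob_on_prob_space)
  obtain B where "\<And>y. y \<in> Y \<Longrightarrow> norm (f y) \<le> B"
    using compact_imp_bounded[OF compact_continuous_image[OF assms(3,1)]]
    unfolding bounded_iff by auto
  then show ?thesis
    using borel_prob_on_measurable_continuous[OF assms(2,3)] borel_prob_on_space[OF assms(2)]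
    by (intro integrable_const_bound[where B=B]) auto
qed

lemma openin_ball_Int: "openin (top_of_set Y) (ball x e \<inter> Y)"
  by (metis Int_commute open_ball openin_open_Int)

lemma supp_on_openin_measure_pos:
  assumes "borel_prob_on Y \<nu>" "x \<in> supp_on Y \<nu>" "openin (top_of_set Y) U" "x \<in> U"
  shows "0 < measure \<nu> U"
proof -
  interpret prob_space \<nu> using assms(1) by (rule borel_prob_on_prob_space)
  obtain e where "0 < e" "ball x e \<inter> Y \<subseteq> U"
    using openin_contains_ball assms(3,4) by metis
  moreover have "U \<in> sets \<nu>" using assms(1,3) by (rule borel_prob_on_openin_sets)
  ultimately have "measure \<nu> (ball x e \<inter> Y) \<le> measure \<nu> U" by (intro finite_measure_mono)
  with \<open>0 < e\<close> assms(2) show ?thesis unfolding supp_on_def by fastforce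
qed

lemma integral_pos_if_supp_on:
  fixes f :: "'a::metric_space \<Rightarrow> real"
  assumes "compact Y" "borel_prob_on Y \<nu>" "x \<in> supp_on Y \<nu>"
    and "continuous_on Y f" "\<And>y. y \<in> Y \<Longrightarrow> 0 \<le> f y" "0 < f x"
  shows "0 < (\<integral>y. f y \<partial>\<nu>)"
proof (rule ccontr)
  assume "\<not> 0 < (\<integral>y. f y \<partial>\<nu>)"
  moreover have space: "space \<nu> = Y" using assms(2) by (rule borel_prob_on_space)
  moreover have "0 \<le> (\<integral>y. f y \<partial>\<nu>)" using assms(5) space by (intro integral_nonneg_AE AE_I2) auto
  ultimately have "AE y in \<nu>. f y = 0"
    using integral_nonneg_eq_0_iff_AE[OF borel_prob_on_integrable_continuous[OF assms(1,2,4)]]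
      assms(5) by auto
  then have "AE y in \<nu>. y \<notin> {y\<in>Y. 0 < f y}" by (auto elim: eventually_mono)
  moreover have pos_open: "openin (top_of_set Y) {y\<in>Y. 0 < f y}"
    using continuous_openin_preimage_gen[OF assms(4) open_greaterThan, of 0]
    by (simp add: vimage_def Int_def)
  ultimately have "measure \<nu> {y\<in>Y. 0 < f y} = 0"
    using AE_iff_measurable[OF borel_prob_on_openin_sets[OF assms(2) pos_open]] space
    by (simp add: measure_def)
  moreover have "0 < measure \<nu> {y\<in>Y. 0 < f y}"
    using assms(3,6) unfolding supp_on_def
    by (intro supp_on_openin_measure_pos[OF assms(2,3) pos_open]) auto
  ultimately show False by simp
qed

lemma in_supp_onI:
  assumes "borel_prob_on Y \<nu>" "x \<in> Y"
    and integral_pos: "\<And>f :: 'a::metric_space \<Rightarrow> real. continuous_on Y f \<Longrightarrow>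
      (\<And>y. y \<in> Y \<Longrightarrow> 0 \<le> f y) \<Longrightarrow> 0 < f x \<Longrightarrow> 0 < (\<integral>y. f y \<partial>\<nu>)"
  shows "x \<in> supp_on Y \<nu>"
  unfolding supp_on_def
proof (intro CollectI conjI allI impI \<open>x \<in> Y\<close>)
  fix e :: real assume "0 < e"
  have ball_sets: "ball x e \<inter> Y \<in> sets \<nu>"
    using assms(1) openin_ball_Int by (rule borel_prob_on_openin_sets)
  define bump where "bump y = max 0 (e - dist y x)" for y
  have pos: "0 < (\<integral>y. bump y \<partial>\<nu>)"
    using \<open>0 < e\<close> unfolding bump_def by (intro integral_pos continuous_intros) auto
  have "measure \<nu> (ball x e \<inter> Y) \<noteq> 0"
  proof
    interpret prob_space \<nu> using assms(1) by (rule borel_prob_on_prob_space)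
    assume "measure \<nu> (ball x e \<inter> Y) = 0"
    then have null: "emeasure \<nu> (ball x e \<inter> Y) = 0" by (simp add: emeasure_eq_measure)
    have "{y \<in> space \<nu>. \<not> bump y = 0} = ball x e \<inter> Y"
      using borel_prob_on_space[OF assms(1)] by (auto simp: bump_def dist_commute)
    from AE_iff_measurable[OF ball_sets this] null have "AE y in \<nu>. bump y = 0" by simp
    then have "(\<integral>y. bump y \<partial>\<nu>) = 0" by (rule integral_eq_zero_AE)
    with pos show False by simp
  qed
  then show "0 < measure \<nu> (ball x e \<inter> Y)"
    using measure_nonneg[of \<nu> "ball x e \<inter> Y"] by (simp add: less_le)
qed

lemma closed_supp_on:
  assumes "closed Y" "borel_prob_on Y \<nu>"
  shows "closed (supp_on Y \<nu>)"
  unfolding closed_limpt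
proof (intro allI impI)
  fix x assume limpt: "x islimpt supp_on Y \<nu>"
  have "x islimpt Y" by (rule islimpt_subset[OF limpt]) (auto simp: supp_on_def)
  with \<open>closed Y\<close> have "x \<in> Y" by (simp add: closed_limpt)
  then show "x \<in> supp_on Y \<nu>"
    unfolding supp_on_def
  proof (intro CollectI conjI allI impI)
    fix e :: real assume "0 < e"
    then obtain z where "z \<in> supp_on Y \<nu>" "dist z x < e"
      using limpt unfolding islimpt_approachable by blast
    then show "0 < measure \<nu> (ball x e \<inter> Y)"
      by (intro supp_on_openin_measure_pos[OF assms(2)])
        (auto simp: supp_on_def openin_ball_Int dist_commute)
  qed
qed

lemma supp_on_nonempty:
  assumes "compact Y" "borel_prob_on Y \<nu>"
  shows "supp_on Y \<nu> \<noteq> {}"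
proof
  assume empty: "supp_on Y \<nu> = {}"
  interpret prob_space \<nu> using assms(2) by (rule borel_prob_on_prob_space)
  have "\<exists>e>0. measure \<nu> (ball x e \<inter> Y) = 0" if "x \<in> Y" for x
  proof -
    obtain e where "0 < e" "\<not> 0 < measure \<nu> (ball x e \<inter> Y)"
      using empty \<open>x \<in> Y\<close> unfolding supp_on_def by blast
    then show ?thesis using measure_nonneg[of \<nu> "ball x e \<inter> Y"] by (intro exI[of _ e]) simp
  qed
  then obtain e where e: "\<And>x. x \<in> Y \<Longrightarrow> 0 < e x \<and> measure \<nu> (ball x (e x) \<inter> Y) = 0"
    by metis
  have "Y \<subseteq> (\<Union>x\<in>Y. ball x (e x))" using e by force
  then obtain C where C: "C \<subseteq> Y" "finite C" "Y \<subseteq> (\<Union>x\<in>C. ball x (e x))"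
    using compactE_image[OF assms(1), of Y "\<lambda>x. ball x (e x)"] by blast
  have "Y = (\<Union>x\<in>C. ball x (e x) \<inter> Y)" using C(3) by blast
  then have "measure \<nu> Y \<le> (\<Sum>x\<in>C. measure \<nu> (ball x (e x) \<inter> Y))"
    using finite_measure_subadditive_finite[OF C(2), of "\<lambda>x. ball x (e x) \<inter> Y"]
      borel_prob_on_openin_sets[OF assms(2) openin_ball_Int] by auto
  also have "\<dots> = 0" using e C(1) by (intro sum.neutral) blast
  finally show False using prob_space borel_prob_on_space[OF assms(2)] by simp
qed

lemma supp_on_eq_if_openin_measure_pos:
  assumes "\<And>U. openin (top_of_set Y) U \<Longrightarrow> U \<noteq> {} \<Longrightarrow> 0 < measure \<nu> U"
  shows "supp_on Y \<nu> = Y"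
  unfolding supp_on_def
proof (intro subset_antisym subsetI CollectI conjI allI impI)
  fix x e assume "x \<in> Y" "(0::real) < e"
  then show "0 < measure \<nu> (ball x e \<inter> Y)" by (intro assms openin_ball_Int) force
qed auto

section \<open>Words of maps\<close>

definition words :: "'l set \<Rightarrow> nat \<Rightarrow> 'l list set" where
  "words L k = {ls. set ls \<subseteq> L \<and> length ls = k}"

lemma words_nonempty: "L \<noteq> {} \<Longrightarrow> words L k \<noteq> {}"
  unfolding words_def
  by (auto intro!: exI[of _ "replicate k (SOME l. l \<in> L)"] some_in_eq[THEN iffD2])

lemma words_0: "words L 0 = {[]}"
  by (auto simp: words_def)

lemma Cons_in_words: "l \<in> L \<Longrightarrow> ls \<in> words L k \<Longrightarrow> l # ls \<in> words L (Suc k)"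
  by (simp add: words_def)

lemma tau_seq_append: "tau_seq \<tau> (xs @ ys) x = tau_seq \<tau> ys (tau_seq \<tau> xs x)"
  by (induction xs arbitrary: x) auto

lemma tau_seq_in:
  assumes "\<And>l x. l \<in> L \<Longrightarrow> x \<in> X \<Longrightarrow> \<tau> l x \<in> X" "set ls \<subseteq> L" "x \<in> X"
  shows "tau_seq \<tau> ls x \<in> X"
  using assms(2,3) by (induction ls arbitrary: x) (auto intro: assms(1))

lemma lipschitz_on_tau_seq:
  assumes maps: "\<And>l x. l \<in> L \<Longrightarrow> x \<in> X \<Longrightarrow> \<tau> l x \<in> X"
    and lip: "\<And>l. l \<in> L \<Longrightarrow> lipschitz_on C X (\<tau> l)" and "0 \<le> C"
  shows "set ls \<subseteq> L \<Longrightarrow> lipschitz_on (C ^ length ls) X (tau_seq \<tau> ls)"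
proof (induction ls)
  case Nil
  then show ?case using lipschitz_on_id by simp
next
  case (Cons l ls)
  have "lipschitz_on (C ^ length ls) (\<tau> l ` X) (tau_seq \<tau> ls)"
    using Cons maps by (auto intro: lipschitz_on_subset)
  from lipschitz_on_compose2[OF lip this] Cons.prems show ?case
    by (simp add: mult.commute)
qed

lemma lipschitz_on_tau_seq_blocks:
  assumes maps: "\<And>l x. l \<in> L \<Longrightarrow> x \<in> X \<Longrightarrow> \<tau> l x \<in> X"
    and block_lip: "\<And>ls. set ls \<subseteq> L \<Longrightarrow> length ls = M \<Longrightarrow> lipschitz_on s X (tau_seq \<tau> ls)"
    and "0 \<le> s"
  shows "set ls \<subseteq> L \<Longrightarrow> length ls = n * M \<Longrightarrow> lipschitz_on (s ^ n) X (tau_seq \<tau> ls)"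
proof (induction n arbitrary: ls)
  case 0
  then show ?case using lipschitz_on_id by simp
next
  case (Suc n)
  have split: "tau_seq \<tau> ls = (\<lambda>x. tau_seq \<tau> (drop M ls) (tau_seq \<tau> (take M ls) x))"
    using tau_seq_append[of \<tau> "take M ls" "drop M ls"] by fastforce
  have head: "lipschitz_on s X (tau_seq \<tau> (take M ls))"
    using Suc.prems by (intro block_lip) (auto dest: in_set_takeD)
  have "set (take M ls) \<subseteq> L" using Suc.prems by (meson order_trans set_take_subset)
  then have "tau_seq \<tau> (take M ls) ` X \<subseteq> X" using tau_seq_in[of L X \<tau>, OF maps] by blast
  then have "lipschitz_on (s ^ n) (tau_seq \<tau> (take M ls) ` X) (tau_seq \<tau> (drop M ls))"
    using Suc.prems by (intro lipschitz_on_subset[OF Suc.IH]) (auto dest: in_set_dropD)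
  from lipschitz_on_compose2[OF head this] show ?case
    by (simp add: split mult.commute)
qed

lemma tau_seq_preimage:
  assumes "A \<subseteq> F_R L \<tau> A" "a \<in> A"
  shows "\<exists>ls a'. ls \<in> words L k \<and> a' \<in> A \<and> tau_seq \<tau> ls a' = a"
  using assms(2)
proof (induction k arbitrary: a)
  case 0
  then show ?case by (auto simp: words_0)
next
  case (Suc k)
  then obtain ls a'' where "ls \<in> words L k" "a'' \<in> A" "tau_seq \<tau> ls a'' = a" by blast
  moreover obtain l a' where "l \<in> L" "a' \<in> A" "a'' = \<tau> l a'"
    using assms(1) \<open>a'' \<in> A\<close> unfolding F_R_def by blast
  ultimately show ?case by (metis Cons_in_words tau_seq.simps(2))
qed

lemma attractor_subset_closed_invariant:
  fixes X :: "'a::metric_space set"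
  assumes "bounded X" and maps: "\<And>l x. l \<in> L \<Longrightarrow> x \<in> X \<Longrightarrow> \<tau> l x \<in> X"
    and block_lip: "\<And>ls. set ls \<subseteq> L \<Longrightarrow> length ls = M \<Longrightarrow> lipschitz_on s X (tau_seq \<tau> ls)"
    and "0 \<le> s" "s < 1"
    and "A \<subseteq> X" "A \<subseteq> F_R L \<tau> A"
    and "closed S" "S \<noteq> {}" "S \<subseteq> X" and S_inv: "\<And>l x. l \<in> L \<Longrightarrow> x \<in> S \<Longrightarrow> \<tau> l x \<in> S"
  shows "A \<subseteq> S"
proof
  fix a assume "a \<in> A"
  obtain x0 where "x0 \<in> S" using \<open>S \<noteq> {}\<close> by blast
  define D where "D = diameter X + 1"
  have "0 < D" unfolding D_def using diameter_ge_0[OF \<open>bounded X\<close>] by simp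
  show "a \<in> S"
  proof (rule closed_approachable[OF \<open>closed S\<close>, THEN iffD1], intro allI impI)
    fix e :: real assume "0 < e"
    have "0 < e / D" using \<open>0 < e\<close> \<open>0 < D\<close> by simp
    from real_arch_pow_inv[OF this \<open>s < 1\<close>] obtain n where n: "s ^ n < e / D" ..
    obtain ls a' where "ls \<in> words L (n * M)" and "a' \<in> A" "tau_seq \<tau> ls a' = a"
      using tau_seq_preimage[OF \<open>A \<subseteq> F_R L \<tau> A\<close> \<open>a \<in> A\<close>] by blast
    then have ls: "set ls \<subseteq> L" "length ls = n * M" by (simp_all add: words_def)
    have "x0 \<in> X" "a' \<in> X" using \<open>x0 \<in> S\<close> \<open>S \<subseteq> X\<close> \<open>a' \<in> A\<close> \<open>A \<subseteq> X\<close> by blast+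
    have "tau_seq \<tau> ls x0 \<in> S" by (rule tau_seq_in[of L S \<tau>, OF S_inv ls(1) \<open>x0 \<in> S\<close>])
    moreover have "dist (tau_seq \<tau> ls x0) a < e"
    proof -
      have "lipschitz_on (s ^ n) X (tau_seq \<tau> ls)"
        using maps block_lip \<open>0 \<le> s\<close> ls by (rule lipschitz_on_tau_seq_blocks)
      from lipschitz_onD[OF this \<open>x0 \<in> X\<close> \<open>a' \<in> X\<close>] \<open>tau_seq \<tau> ls a' = a\<close>
      have "dist (tau_seq \<tau> ls x0) a \<le> s ^ n * dist x0 a'" by simp
      also have "\<dots> \<le> s ^ n * D"
        unfolding D_def using diameter_bounded_bound[OF \<open>bounded X\<close> \<open>x0 \<in> X\<close> \<open>a' \<in> X\<close>] \<open>0 \<le> s\<close>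
        by (intro mult_left_mono) simp_all
      also have "\<dots> < e" using n \<open>0 < D\<close> by (simp add: pos_less_divide_eq)
      finally show ?thesis .
    qed
    ultimately show "\<exists>y\<in>S. dist y a < e" by blast
  qed
qed

section \<open>A Lyapunov function for the distance to the attractor\<close>

lemma le_mult_infdistI:
  assumes "A \<noteq> {}" "0 \<le> s" "\<And>a. a \<in> A \<Longrightarrow> c \<le> s * dist x a"
  shows "c \<le> s * infdist x A"
proof (cases "s = 0")
  case True
  then show ?thesis using assms(1,3) by fastforce
next
  case False
  with assms(2) have "0 < s" by simp
  then have "c / s \<le> infdist x A"
    unfolding infdist_notempty[OF assms(1)] using assms(3)
    by (intro cINF_greatest[OF assms(1)]) (simp add: pos_divide_le_eq mult.commute)
  with \<open>0 < s\<close> show ?thesis by (simp add: pos_divide_le_eq mult.commute)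
qed

definition sup_word_infdist :: "('l \<Rightarrow> 'a::metric_space \<Rightarrow> 'a) \<Rightarrow> 'l set \<Rightarrow> 'a set \<Rightarrow> nat \<Rightarrow> 'a \<Rightarrow> real"
  where "sup_word_infdist \<tau> L A k x = (SUP ls\<in>words L k. infdist (tau_seq \<tau> ls x) A)"

lemma sup_word_infdist_0: "sup_word_infdist \<tau> L A 0 x = infdist x A"
  by (simp add: sup_word_infdist_def words_0)

context
  fixes X :: "'a::metric_space set" and L :: "'l set" and \<tau> :: "'l \<Rightarrow> 'a \<Rightarrow> 'a" and A :: "'a set"
  assumes bounded_X: "bounded X" and L_ne: "L \<noteq> {}"
    and maps: "\<And>l x. l \<in> L \<Longrightarrow> x \<in> X \<Longrightarrow> \<tau> l x \<in> X"
    and A_ne: "A \<noteq> {}" and A_sub: "A \<subseteq> X"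
begin

lemma infdist_le_sup_word_infdist:
  assumes "ls \<in> words L k" "x \<in> X"
  shows "infdist (tau_seq \<tau> ls x) A \<le> sup_word_infdist \<tau> L A k x"
proof -
  obtain a where a: "a \<in> A" using A_ne by blast
  have bound: "infdist (tau_seq \<tau> ls' x) A \<le> diameter X" if "ls' \<in> words L k" for ls'
  proof -
    have "set ls' \<subseteq> L" using that by (simp add: words_def)
    from tau_seq_in[of L X \<tau>, OF maps this assms(2)] have "tau_seq \<tau> ls' x \<in> X" .
    then have "dist (tau_seq \<tau> ls' x) a \<le> diameter X"
      using diameter_bounded_bound[OF bounded_X] a A_sub by blast
    then show ?thesis using infdist_le[OF a] by (rule order_trans[rotated])
  qed
  have "bdd_above ((\<lambda>ls. infdist (tau_seq \<tau> ls x) A) ` words L k)"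
    using bound by (rule bdd_aboveI2)
  then show ?thesis unfolding sup_word_infdist_def by (rule cSUP_upper[OF assms(1)])
qed

lemma sup_word_infdist_least:
  "(\<And>ls. ls \<in> words L k \<Longrightarrow> infdist (tau_seq \<tau> ls x) A \<le> c) \<Longrightarrow> sup_word_infdist \<tau> L A k x \<le> c"
  unfolding sup_word_infdist_def by (rule cSUP_least[OF words_nonempty[OF L_ne]])

lemma sup_word_infdist_step:
  assumes "l \<in> L" "x \<in> X"
  shows "sup_word_infdist \<tau> L A k (\<tau> l x) \<le> sup_word_infdist \<tau> L A (Suc k) x"
proof (rule sup_word_infdist_least)
  fix ls assume "ls \<in> words L k"
  from infdist_le_sup_word_infdist[OF Cons_in_words[OF assms(1) this] assms(2)]
  show "infdist (tau_seq \<tau> ls (\<tau> l x)) A \<le> sup_word_infdist \<tau> L A (Suc k) x" by simp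
qed

lemma lipschitz_on_sup_word_infdist:
  assumes "\<And>l. l \<in> L \<Longrightarrow> lipschitz_on 1 X (\<tau> l)"
  shows "lipschitz_on 1 X (sup_word_infdist \<tau> L A k)"
proof (rule lipschitz_onI)
  have le: "sup_word_infdist \<tau> L A k x \<le> sup_word_infdist \<tau> L A k y + dist x y"
    if "x \<in> X" "y \<in> X" for x y
  proof (rule sup_word_infdist_least)
    fix ls assume ls: "ls \<in> words L k"
    have "dist (tau_seq \<tau> ls x) (tau_seq \<tau> ls y) \<le> dist x y"
      using lipschitz_onD[OF lipschitz_on_tau_seq[of L X \<tau>, OF maps assms] that] ls
      by (simp add: words_def)
    then show "infdist (tau_seq \<tau> ls x) A \<le> sup_word_infdist \<tau> L A k y + dist x y"
      using infdist_triangle[of "tau_seq \<tau> ls x" A "tau_seq \<tau> ls y"]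
        infdist_le_sup_word_infdist[OF ls that(2)] by linarith
  qed
  fix x y assume "x \<in> X" "y \<in> X"
  then show "dist (sup_word_infdist \<tau> L A k x) (sup_word_infdist \<tau> L A k y) \<le> 1 * dist x y"
    using le[of x y] le[of y x] by (simp add: dist_real_def dist_commute abs_le_iff)
qed simp

lemma sup_word_infdist_block_le:
  assumes A_inv: "\<And>l a. l \<in> L \<Longrightarrow> a \<in> A \<Longrightarrow> \<tau> l a \<in> A"
    and block_lip: "\<And>ls. set ls \<subseteq> L \<Longrightarrow> length ls = M \<Longrightarrow> lipschitz_on s X (tau_seq \<tau> ls)"
    and "x \<in> X"
  shows "sup_word_infdist \<tau> L A M x \<le> s * infdist x A"
proof (rule sup_word_infdist_least)
  fix ls assume ls: "ls \<in> words L M"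
  have lip: "lipschitz_on s X (tau_seq \<tau> ls)" using ls block_lip by (simp add: words_def)
  show "infdist (tau_seq \<tau> ls x) A \<le> s * infdist x A"
  proof (rule le_mult_infdistI[OF A_ne lipschitz_on_nonneg[OF lip]])
    fix a assume "a \<in> A"
    moreover have "set ls \<subseteq> L" using ls by (simp add: words_def)
    ultimately have "tau_seq \<tau> ls a \<in> A" using tau_seq_in[of L A \<tau>, OF A_inv] by blast
    then have "infdist (tau_seq \<tau> ls x) A \<le> dist (tau_seq \<tau> ls x) (tau_seq \<tau> ls a)"
      by (rule infdist_le)
    also have "\<dots> \<le> s * dist x a" using lipschitz_onD[OF lip \<open>x \<in> X\<close>] \<open>a \<in> A\<close> A_sub by blast
    finally show "infdist (tau_seq \<tau> ls x) A \<le> s * dist x a" .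
  qed
qed

lemma infdist_lyapunov_function:
  assumes "\<And>l. l \<in> L \<Longrightarrow> lipschitz_on 1 X (\<tau> l)"
    and "\<And>l a. l \<in> L \<Longrightarrow> a \<in> A \<Longrightarrow> \<tau> l a \<in> A"
    and "\<And>ls. set ls \<subseteq> L \<Longrightarrow> length ls = M \<Longrightarrow> lipschitz_on s X (tau_seq \<tau> ls)"
  obtains h where "continuous_on X h"
    "\<And>l x. l \<in> L \<Longrightarrow> x \<in> X \<Longrightarrow> h (\<tau> l x) + (1 - s) * infdist x A \<le> h x"
proof -
  define h where "h x = (\<Sum>k<M. sup_word_infdist \<tau> L A k x)" for x
  have "continuous_on X (sup_word_infdist \<tau> L A k)" for k
    by (rule lipschitz_on_continuous_on[OF lipschitz_on_sup_word_infdist[OF assms(1)]])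
  then have "continuous_on X h" unfolding h_def by (intro continuous_on_sum)
  moreover have "h (\<tau> l x) + (1 - s) * infdist x A \<le> h x" if "l \<in> L" "x \<in> X" for l x
  proof -
    have "h (\<tau> l x) \<le> (\<Sum>k<M. sup_word_infdist \<tau> L A (Suc k) x)"
      unfolding h_def using that by (intro sum_mono sup_word_infdist_step)
    also have "\<dots> = h x + sup_word_infdist \<tau> L A M x - infdist x A"
      using sum.lessThan_Suc_shift[of "\<lambda>k. sup_word_infdist \<tau> L A k x" M]
        sum.lessThan_Suc[of "\<lambda>k. sup_word_infdist \<tau> L A k x" M]
      unfolding h_def by (simp add: sup_word_infdist_0)
    also have "\<dots> \<le> h x - (1 - s) * infdist x A"
      using sup_word_infdist_block_le[OF assms(2,3) that(2)] by (simp add: algebra_simps)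
    finally show ?thesis by simp
  qed
  ultimately show ?thesis by (rule that)
qed

end

section \<open>Place-dependent iterated function systems\<close>

definition Tq_dual :: "('l \<Rightarrow> 'a \<Rightarrow> 'a) \<Rightarrow> ('a \<Rightarrow> 'l measure) \<Rightarrow> ('a \<Rightarrow> real) \<Rightarrow> 'a \<Rightarrow> real" where
  "Tq_dual \<tau> q f x = (\<integral>l. f (\<tau> l x) \<partial>q x)"

lemma Tq_fixed_integral_Tq_dual:
  "Tq_fixed X \<tau> q \<mu> \<Longrightarrow> continuous_on X f \<Longrightarrow> (\<integral>x. f x \<partial>\<mu>) = (\<integral>x. Tq_dual \<tau> q f x \<partial>\<mu>)"
  by (simp add: Tq_fixed_def Tq_dual_def)

locale place_dependent_ifs =
  fixes X :: "'a::metric_space set" and L :: "'l::metric_space set"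
    and \<tau> :: "'l \<Rightarrow> 'a \<Rightarrow> 'a" and q :: "'a \<Rightarrow> 'l measure"
  assumes compact_X: "compact X" and compact_L: "compact L"
    and tau_maps: "\<And>l x. l \<in> L \<Longrightarrow> x \<in> X \<Longrightarrow> \<tau> l x \<in> X"
    and tau_cont: "continuous_on (L \<times> X) (\<lambda>(l, x). \<tau> l x)"
    and q_prob: "\<And>x. x \<in> X \<Longrightarrow> borel_prob_on L (q x)"
    and q_cont: "\<And>f::'l \<Rightarrow> real. continuous_on L f \<Longrightarrow> continuous_on X (\<lambda>x. \<integral>l. f l \<partial>(q x))"
begin

lemma continuous_on_comp_tau:
  assumes "continuous_on X f"
  shows "continuous_on (L \<times> X) (\<lambda>(l, x). f (\<tau> l x))"
proof -
  have "continuous_on (L \<times> X) (\<lambda>p. f ((\<lambda>(l, x). \<tau> l x) p))"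
    by (rule continuous_on_compose2[OF assms tau_cont]) (auto intro: tau_maps)
  then show ?thesis by (simp add: prod.case_distrib)
qed

lemma continuous_on_comp_tau_left:
  assumes "continuous_on X f" "x \<in> X"
  shows "continuous_on L (\<lambda>l. f (\<tau> l x))"
proof -
  have "continuous_on L (\<lambda>l. (\<lambda>(l, x). f (\<tau> l x)) (l, x))"
    by (rule continuous_on_compose2[OF continuous_on_comp_tau[OF assms(1)]])
      (auto intro!: continuous_intros simp: assms(2))
  then show ?thesis by simp
qed

lemma integrable_comp_tau:
  fixes f :: "'a \<Rightarrow> real"
  shows "continuous_on X f \<Longrightarrow> x \<in> X \<Longrightarrow> y \<in> X \<Longrightarrow> integrable (q y) (\<lambda>l. f (\<tau> l x))"
  by (rule borel_prob_on_integrable_continuous[OF compact_L q_prob continuous_on_comp_tau_left])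

lemma continuous_on_Tq_dual:
  fixes f :: "'a \<Rightarrow> real"
  assumes f: "continuous_on X f"
  shows "continuous_on X (Tq_dual \<tau> q f)"
  unfolding continuous_on_iff
proof (intro ballI allI impI)
  fix x e assume x: "x \<in> X" and "(0::real) < e"
  have "uniformly_continuous_on (L \<times> X) (\<lambda>(l, x). f (\<tau> l x))"
    by (intro compact_uniformly_continuous continuous_on_comp_tau f compact_Times
        compact_L compact_X)
  then obtain d1 where "0 < d1" and d1: "\<And>l x'. l \<in> L \<Longrightarrow> x' \<in> X \<Longrightarrow> dist x' x < d1 \<Longrightarrow>
      \<bar>f (\<tau> l x') - f (\<tau> l x)\<bar> < e / 2"
    unfolding uniformly_continuous_on_def using \<open>0 < e\<close> x
    by (drule_tac x="e / 2" in spec) (force simp: dist_Pair_Pair dist_real_def)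
  obtain d2 where "0 < d2" and d2: "\<And>x'. x' \<in> X \<Longrightarrow> dist x' x < d2 \<Longrightarrow>
      \<bar>(\<integral>l. f (\<tau> l x) \<partial>q x') - (\<integral>l. f (\<tau> l x) \<partial>q x)\<bar> < e / 2"
    using q_cont[OF continuous_on_comp_tau_left[OF f x]] x \<open>0 < e\<close>
    unfolding continuous_on_iff dist_real_def by (meson half_gt_zero)
  show "\<exists>d>0. \<forall>x'\<in>X. dist x' x < d \<longrightarrow> dist (Tq_dual \<tau> q f x') (Tq_dual \<tau> q f x) < e"
  proof (intro exI[of _ "min d1 d2"] conjI ballI impI)
    fix x' assume x': "x' \<in> X" and "dist x' x < min d1 d2"
    interpret prob_space "q x'" using q_prob[OF x'] by (rule borel_prob_on_prob_space)
    have "\<bar>Tq_dual \<tau> q f x' - (\<integral>l. f (\<tau> l x) \<partial>q x')\<bar> \<le> e / 2"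
      unfolding Tq_dual_def
      using integrable_comp_tau[OF f] x x' d1 \<open>dist x' x < min d1 d2\<close>
        borel_prob_on_space[OF q_prob[OF x']]
      by (intro abs_integral_diff_le) (auto intro: less_imp_le)
    then show "dist (Tq_dual \<tau> q f x') (Tq_dual \<tau> q f x) < e"
      using d2[OF x'] \<open>dist x' x < min d1 d2\<close> unfolding Tq_dual_def dist_real_def by linarith
  qed (use \<open>0 < d1\<close> \<open>0 < d2\<close> in simp)
qed

lemma Tq_dual_nonneg:
  "(\<And>y. y \<in> X \<Longrightarrow> 0 \<le> f y) \<Longrightarrow> x \<in> X \<Longrightarrow> 0 \<le> Tq_dual \<tau> q f x"
  unfolding Tq_dual_def using borel_prob_on_space[OF q_prob] tau_maps
  by (intro integral_nonneg_AE AE_I2) auto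

lemma Tq_dual_le:
  assumes "continuous_on X f" "x \<in> X" "\<And>l. l \<in> L \<Longrightarrow> f (\<tau> l x) \<le> c"
  shows "Tq_dual \<tau> q f x \<le> c"
proof -
  interpret prob_space "q x" using q_prob[OF assms(2)] by (rule borel_prob_on_prob_space)
  show ?thesis
    unfolding Tq_dual_def using assms(3) borel_prob_on_space[OF q_prob[OF assms(2)]]
    by (intro integral_le_const integrable_comp_tau[OF assms(1,2,2)] AE_I2) auto
qed

lemma integral_nonpos_if_decreasing:
  fixes h g :: "'a \<Rightarrow> real"
  assumes \<mu>: "borel_prob_on X \<mu>" "Tq_fixed X \<tau> q \<mu>"
    and cont: "continuous_on X h" "continuous_on X g"
    and decr: "\<And>l x. l \<in> L \<Longrightarrow> x \<in> X \<Longrightarrow> h (\<tau> l x) + g x \<le> h x"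
  shows "(\<integral>x. g x \<partial>\<mu>) \<le> 0"
proof -
  have int: "integrable \<mu> h" "integrable \<mu> g" "integrable \<mu> (Tq_dual \<tau> q h)"
    using borel_prob_on_integrable_continuous[OF compact_X \<mu>(1)] cont continuous_on_Tq_dual
    by auto
  have "(\<integral>x. h x \<partial>\<mu>) = (\<integral>x. Tq_dual \<tau> q h x \<partial>\<mu>)"
    by (rule Tq_fixed_integral_Tq_dual[OF \<mu>(2) cont(1)])
  also have "\<dots> \<le> (\<integral>x. h x - g x \<partial>\<mu>)"
    using int borel_prob_on_space[OF \<mu>(1)] decr
    by (intro integral_mono Tq_dual_le[OF cont(1)]) (auto simp: algebra_simps)
  also have "\<dots> = (\<integral>x. h x \<partial>\<mu>) - (\<integral>x. g x \<partial>\<mu>)" using int by simp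
  finally show ?thesis by simp
qed

lemma supp_on_tau_invariant:
  assumes full: "\<And>x. x \<in> X \<Longrightarrow> supp_on L (q x) = L"
    and \<mu>: "borel_prob_on X \<mu>" "Tq_fixed X \<tau> q \<mu>"
    and y: "y \<in> supp_on X \<mu>" and l: "l \<in> L"
  shows "\<tau> l y \<in> supp_on X \<mu>"
proof -
  have "y \<in> X" using y by (simp add: supp_on_def)
  show ?thesis
  proof (rule in_supp_onI[OF \<mu>(1) tau_maps[OF l \<open>y \<in> X\<close>]])
    fix f :: "'a \<Rightarrow> real"
    assume f: "continuous_on X f" "\<And>z. z \<in> X \<Longrightarrow> 0 \<le> f z" "0 < f (\<tau> l y)"
    have "0 < Tq_dual \<tau> q f y"
      unfolding Tq_dual_def using full[OF \<open>y \<in> X\<close>] l f \<open>y \<in> X\<close> tau_maps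
      by (intro integral_pos_if_supp_on[OF compact_L q_prob] continuous_on_comp_tau_left) auto
    then have "0 < (\<integral>x. Tq_dual \<tau> q f x \<partial>\<mu>)"
      using f(2)
      by (intro integral_pos_if_supp_on[OF compact_X \<mu>(1) y] continuous_on_Tq_dual f(1)
          Tq_dual_nonneg)
    then show "0 < (\<integral>x. f x \<partial>\<mu>)" using Tq_fixed_integral_Tq_dual[OF \<mu>(2) f(1)] by simp
  qed
qed

lemma supp_on_subset_attractor:
  assumes "L \<noteq> {}" and lip1: "\<And>l. l \<in> L \<Longrightarrow> lipschitz_on 1 X (\<tau> l)"
    and block_lip: "\<And>ls. set ls \<subseteq> L \<Longrightarrow> length ls = M \<Longrightarrow> lipschitz_on s X (tau_seq \<tau> ls)"
    and "s < 1"
    and A: "closed A" "A \<noteq> {}" "A \<subseteq> X" and A_inv: "\<And>l a. l \<in> L \<Longrightarrow> a \<in> A \<Longrightarrow> \<tau> l a \<in> A"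
    and \<mu>: "borel_prob_on X \<mu>" "Tq_fixed X \<tau> q \<mu>"
  shows "supp_on X \<mu> \<subseteq> A"
proof
  fix x assume x: "x \<in> supp_on X \<mu>"
  obtain h where h: "continuous_on X h"
    "\<And>l x. l \<in> L \<Longrightarrow> x \<in> X \<Longrightarrow> h (\<tau> l x) + (1 - s) * infdist x A \<le> h x"
    using infdist_lyapunov_function[OF compact_imp_bounded[OF compact_X] \<open>L \<noteq> {}\<close> tau_maps
        A(2,3) lip1 A_inv block_lip] by blast
  have "(\<integral>y. (1 - s) * infdist y A \<partial>\<mu>) \<le> 0"
    using h by (intro integral_nonpos_if_decreasing[OF \<mu>] continuous_intros)
  show "x \<in> A"
  proof (rule ccontr)
    assume "x \<notin> A"
    then have "0 < infdist x A" using infdist_pos_not_in_closed A(1,2) by blast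
    then have "0 < (\<integral>y. (1 - s) * infdist y A \<partial>\<mu>)"
      using \<open>s < 1\<close>
      by (intro integral_pos_if_supp_on[OF compact_X \<mu>(1) x] continuous_intros)
        (auto intro!: mult_nonneg_nonneg infdist_nonneg)
    with \<open>(\<integral>y. (1 - s) * infdist y A \<partial>\<mu>) \<le> 0\<close> show False by simp
  qed
qed

lemma attractor_subset_supp_on:
  assumes block_lip: "\<And>ls. set ls \<subseteq> L \<Longrightarrow> length ls = M \<Longrightarrow> lipschitz_on s X (tau_seq \<tau> ls)"
    and "0 \<le> s" "s < 1" and A: "A \<subseteq> X" "A \<subseteq> F_R L \<tau> A"
    and full: "\<And>x. x \<in> X \<Longrightarrow> supp_on L (q x) = L"
    and \<mu>: "borel_prob_on X \<mu>" "Tq_fixed X \<tau> q \<mu>"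
  shows "A \<subseteq> supp_on X \<mu>"
  using compact_imp_bounded[OF compact_X] tau_maps block_lip \<open>0 \<le> s\<close> \<open>s < 1\<close> A
    closed_supp_on[OF compact_imp_closed[OF compact_X] \<mu>(1)] supp_on_nonempty[OF compact_X \<mu>(1)]
proof (rule attractor_subset_closed_invariant)
  show "supp_on X \<mu> \<subseteq> X" by (auto simp: supp_on_def)
  show "\<And>l x. l \<in> L \<Longrightarrow> x \<in> supp_on X \<mu> \<Longrightarrow> \<tau> l x \<in> supp_on X \<mu>"
    using full \<mu> by (rule supp_on_tau_invariant)
qed

end

theorem mainTheorem13:
  fixes X :: "'a::metric_space set" and L :: "'l::metric_space set"
    and \<tau> :: "'l \<Rightarrow> 'a \<Rightarrow> 'a" and q :: "'a \<Rightarrow> 'l measure"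
    and M :: nat and s r t :: real
    and A :: "'a set" and \<mu> :: "'a measure"
  assumes X_cpt: "compact X" "X \<noteq> {}"
    and L_cpt: "compact L" "L \<noteq> {}"
    and tau_maps: "\<And>l x. l \<in> L \<Longrightarrow> x \<in> X \<Longrightarrow> \<tau> l x \<in> X"
    and tau_cont: "continuous_on (L \<times> X) (\<lambda>(l, x). \<tau> l x)"
    and q_prob: "\<And>x. x \<in> X \<Longrightarrow> borel_prob_on L (q x)"
    and q_cont: "\<And>f::'l \<Rightarrow> real. continuous_on L f \<Longrightarrow> continuous_on X (\<lambda>x. \<integral>l. f l \<partial>(q x))"
    and W1: "\<And>l. l \<in> L \<Longrightarrow> lipschitz_on 1 X (\<tau> l)"
    and CP1: "M \<ge> 1" "0 < s" "s < 1"
      "\<And>ls. set ls \<subseteq> L \<Longrightarrow> length ls = M \<Longrightarrow> lipschitz_on s X (tau_seq \<tau> ls)"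
    and H2: "r \<ge> 0"
      "\<And>l1 l2 x. l1 \<in> L \<Longrightarrow> l2 \<in> L \<Longrightarrow> x \<in> X \<Longrightarrow> dist (\<tau> l1 x) (\<tau> l2 x) \<le> r * dist l1 l2"
    and H3: "t \<ge> 0"
      "\<And>x y. x \<in> X \<Longrightarrow> y \<in> X \<Longrightarrow> dMK L (q x) (q y) \<le> t * dist x y"
    and H4: "\<And>U x. openin (top_of_set L) U \<Longrightarrow> U \<noteq> {} \<Longrightarrow> x \<in> X \<Longrightarrow> measure (q x) U > 0"
    and contr: "s + r * real M * t < 1"
    and A_attr: "compact A" "A \<noteq> {}" "A \<subseteq> X" "F_R L \<tau> A = A"
    and mu_inv: "borel_prob_on X \<mu>" "Tq_fixed X \<tau> q \<mu>"
  shows "supp_on X \<mu> = A"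
proof -
  (* (H2), (H3) and s + r M t < 1 only serve the uniqueness of \<mu>; the support identity holds
     for every T_q-invariant \<mu>. *)
  interpret place_dependent_ifs X L \<tau> q
    using X_cpt(1) L_cpt(1) tau_maps tau_cont q_prob q_cont by unfold_locales
  have A_inv: "\<And>l a. l \<in> L \<Longrightarrow> a \<in> A \<Longrightarrow> \<tau> l a \<in> A"
    using A_attr(4) unfolding F_R_def by blast
  have full: "supp_on L (q x) = L" if "x \<in> X" for x
    using H4[OF _ _ that] by (rule supp_on_eq_if_openin_measure_pos)
  show ?thesis
  proof
    show "supp_on X \<mu> \<subseteq> A"
      using L_cpt(2) W1 CP1(4,3) compact_imp_closed[OF A_attr(1)] A_attr(2,3) A_inv mu_inv
      by (rule supp_on_subset_attractor)
    show "A \<subseteq> supp_on X \<mu>"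
      using CP1(4) less_imp_le[OF CP1(2)] CP1(3) A_attr(3) equalityD2[OF A_attr(4)] full mu_inv
      by (rule attractor_subset_supp_on)
  qed
qed

end
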